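(* Let $G=\langle \mathcal{V},E\rangle$ be a finite undirected graph, let $m\ge 1$ be the number of pursuers, let $f:\mathcal{V}^m\times\mathcal{V}\to\{0,1\}$ be a termination function, and let $\gamma\in(0,1)$. Consider the no-exit pursuit-evasion Markov game on $G$ described in the context, and let $D:\mathcal{V}^m\times\mathcal{V}\to\mathbb{N}\cup\{\infty\}$ and the policies $\mu,\nu$ be the output of the dynamic programming algorithm described in the context. If this game admits a pure-strategy Nash equilibrium, then for every state $s=(s_p,s_e)$ the Nash value satisfies $V^*(s)=\gamma^{D(s_p,s_e)}$, and the joint policy $(\mu,\nu)$ is a Nash equilibrium of the game.
   Context: For a node $v\in\mathcal{V}$, $\mathrm{Neighbor}(v)$ denotes the set of nodes adjacent to $v$ together with $v$ itself. For $s_p=(v^1,\dots,v^m)\in\mathcal{V}^m$, $\mathrm{Neighbor}(s_p)=\mathrm{Neighbor}(v^1)\times\cdots\times\mathrm{Neighbor}(v^m)\subseteq\mathcal{V}^m$. Game: a two-player zero-sum Markov game with state space $S=\mathcal{V}^m\times\mathcal{V}$; a state $s=(s_p,s_e)$ lists the positions $s_p=(v_p^1,\dots,v_p^m)$ of the $m$ pursuers (together the max-player) and the position $s_e=v_e$ of the evader (the min-player). At each step both players move simultaneously: the pursuer team chooses $a\in\mathrm{Neighbor}(s_p)$ and the evader chooses $b\in\mathrm{Neighbor}(s_e)$; the transition is deterministic to the state $(a,b)$. States with $f(s_p,s_e)=1$ are terminal: the game ends there with reward $+1$ to the pursuers; all other rewards are $0$; the discount factor is $\gamma$. Thus the Nash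 value $V^*$ satisfies $V^*(s)=1$ if $f(s)=1$, and otherwise $V^*(s)=\max_{\mu(s)\in\Delta(\mathcal{A})}\min_{b}\sum_a\mu(s,a)\,\gamma V^*(a,b)$. A Nash equilibrium $(\mu^*,\nu^* )$ satisfies $V^{\mu,\nu^*}\le V^{\mu^*,\nu^*}\le V^{\mu^*,\nu}$ at all states for all policies $\mu,\nu$; a pure-strategy Nash equilibrium is one in which both policies are deterministic. We use the convention $\gamma^{\infty}=0$. Algorithm: Initialize an empty FIFO queue $\mathcal{Q}$ and set $D\equiv\infty$. For every $(s_p,s_e)$ with $f(s_p,s_e)=1$, set $D(s_p,s_e)=0$ and push $(s_p,s_e)$ into $\mathcal{Q}$. While $\mathcal{Q}$ is nonempty: pop the first element $(s_p,s_e)$; for each $n_e\in\mathrm{Neighbor}(s_e)$ such that there is no $n_e'\in\mathrm{Neighbor}(n_e)$ with $D(s_p,n_e')>D(s_p,s_e)$, and for each $n_p\in\mathrm{Neighbor}(s_p)$ with $D(n_p,n_e)=\infty$, set $D(n_p,n_e)=D(s_p,s_e)+1$ and push $(n_p,n_e)$ into $\mathcal{Q}$. Finally, for every state $(s_p,s_e)$, define the pursuer policy $\mu(s_p,s_e)\in\arg\min_{n_p\in\mathrm{Neighbor}(s_p)}\max_{n_e\in\mathrm{Neighbor}(s_e)}D(n_p,n_e)$ and the evader policy $\nu(s_p,s_e)\in\arg\max_{n_e\in\mathrm{Neighbor}(s_e)}\min_{n_p\in\mathrm{Neighbor}(s_p)}D(n_p,n_e)$ (both deterministic). *)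

theory Defs
  imports "HOL-Probability.Probability_Mass_Function" "HOL-Library.Extended_Nat"
begin

type_synonym 'v state = "'v list \<times> 'v"

definition Nbr :: "('v \<Rightarrow> 'v \<Rightarrow> bool) \<Rightarrow> 'v \<Rightarrow> 'v set" where
  "Nbr E v = {u. E v u} \<union> {v}"

definition NbrP :: "('v \<Rightarrow> 'v \<Rightarrow> bool) \<Rightarrow> 'v list \<Rightarrow> 'v list set" where
  "NbrP E sp = {a. length a = length sp \<and> (\<forall>i<length sp. a ! i \<in> Nbr E (sp ! i))}"

definition states :: "nat \<Rightarrow> 'v state set" where
  "states m = {s. length (fst s) = m}"

definition valid_ppol :: "('v \<Rightarrow> 'v \<Rightarrow> bool) \<Rightarrow> nat \<Rightarrow> ('v state \<Rightarrow> 'v list pmf) \<Rightarrow> bool" where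
  "valid_ppol E m \<mu> = (\<forall>s\<in>states m. set_pmf (\<mu> s) \<subseteq> NbrP E (fst s))"

definition valid_epol :: "('v \<Rightarrow> 'v \<Rightarrow> bool) \<Rightarrow> nat \<Rightarrow> ('v state \<Rightarrow> 'v pmf) \<Rightarrow> bool" where
  "valid_epol E m \<nu> = (\<forall>s\<in>states m. set_pmf (\<nu> s) \<subseteq> Nbr E (snd s))"

fun val_iter :: "('v list \<Rightarrow> 'v \<Rightarrow> bool) \<Rightarrow> real \<Rightarrow> ('v state \<Rightarrow> 'v list pmf)
    \<Rightarrow> ('v state \<Rightarrow> 'v pmf) \<Rightarrow> nat \<Rightarrow> 'v state \<Rightarrow> real" where
  "val_iter f \<gamma> \<mu> \<nu> 0 s = 0"
| "val_iter f \<gamma> \<mu> \<nu> (Suc n) s =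
     (if f (fst s) (snd s) then 1
      else \<gamma> * measure_pmf.expectation (\<mu> s)
                 (\<lambda>a. measure_pmf.expectation (\<nu> s) (\<lambda>b. val_iter f \<gamma> \<mu> \<nu> n (a, b))))"

definition policy_value :: "('v list \<Rightarrow> 'v \<Rightarrow> bool) \<Rightarrow> real \<Rightarrow> ('v state \<Rightarrow> 'v list pmf)
    \<Rightarrow> ('v state \<Rightarrow> 'v pmf) \<Rightarrow> 'v state \<Rightarrow> real" where
  "policy_value f \<gamma> \<mu> \<nu> s = lim (\<lambda>n. val_iter f \<gamma> \<mu> \<nu> n s)"

definition is_nash_eq :: "('v \<Rightarrow> 'v \<Rightarrow> bool) \<Rightarrow> nat \<Rightarrow> ('v list \<Rightarrow> 'v \<Rightarrow> bool) \<Rightarrow> real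
    \<Rightarrow> ('v state \<Rightarrow> 'v list pmf) \<Rightarrow> ('v state \<Rightarrow> 'v pmf) \<Rightarrow> bool" where
  "is_nash_eq E m f \<gamma> \<mu> \<nu> =
     (valid_ppol E m \<mu> \<and> valid_epol E m \<nu> \<and>
      (\<forall>\<mu>'. valid_ppol E m \<mu>' \<longrightarrow>
         (\<forall>s\<in>states m. policy_value f \<gamma> \<mu>' \<nu> s \<le> policy_value f \<gamma> \<mu> \<nu> s)) \<and>
      (\<forall>\<nu>'. valid_epol E m \<nu>' \<longrightarrow>
         (\<forall>s\<in>states m. policy_value f \<gamma> \<mu> \<nu> s \<le> policy_value f \<gamma> \<mu> \<nu>' s)))"

definition has_pure_nash_eq :: "('v \<Rightarrow> 'v \<Rightarrow> bool) \<Rightarrow> nat \<Rightarrow> ('v list \<Rightarrow> 'v \<Rightarrow> bool) \<Rightarrow> real \<Rightarrow> bool" where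
  "has_pure_nash_eq E m f \<gamma> =
     (\<exists>\<mu> \<nu>. is_nash_eq E m f \<gamma> (\<lambda>s. return_pmf (\<mu> s)) (\<lambda>s. return_pmf (\<nu> s)))"

definition shapley_rhs :: "('v \<Rightarrow> 'v \<Rightarrow> bool) \<Rightarrow> ('v list \<Rightarrow> 'v \<Rightarrow> bool) \<Rightarrow> real
    \<Rightarrow> ('v state \<Rightarrow> real) \<Rightarrow> 'v state \<Rightarrow> real" where
  "shapley_rhs E f \<gamma> V s =
     (if f (fst s) (snd s) then 1
      else Sup ((\<lambda>p. Min ((\<lambda>b. \<gamma> * measure_pmf.expectation p (\<lambda>a. V (a, b))) ` Nbr E (snd s)))
                 ` {p. set_pmf p \<subseteq> NbrP E (fst s)}))"

definition is_nash_value :: "('v \<Rightarrow> 'v \<Rightarrow> bool) \<Rightarrow> nat \<Rightarrow> ('v list \<Rightarrow> 'v \<Rightarrow> bool) \<Rightarrow> real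
    \<Rightarrow> ('v state \<Rightarrow> real) \<Rightarrow> bool" where
  "is_nash_value E m f \<gamma> V =
     ((\<forall>s\<in>states m. V s = shapley_rhs E f \<gamma> V s) \<and> (\<forall>s. s \<notin> states m \<longrightarrow> V s = 0))"

text \<open>The Nash value V* (the unique solution of the minimax equation on the state space).\<close>
definition nash_value :: "('v \<Rightarrow> 'v \<Rightarrow> bool) \<Rightarrow> nat \<Rightarrow> ('v list \<Rightarrow> 'v \<Rightarrow> bool) \<Rightarrow> real
    \<Rightarrow> 'v state \<Rightarrow> real" where
  "nash_value E m f \<gamma> = (THE V. is_nash_value E m f \<gamma> V)"

definition enat_pow :: "real \<Rightarrow> enat \<Rightarrow> real" where
  "enat_pow \<gamma> d = (case d of enat n \<Rightarrow> \<gamma> ^ n | \<infinity> \<Rightarrow> 0)"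

subsection \<open>The dynamic programming (queue) algorithm, as a nondeterministic small-step semantics\<close>

definition proc_np :: "enat \<Rightarrow> 'v \<Rightarrow> 'v list \<Rightarrow> ('v state \<Rightarrow> enat) \<times> 'v state list
    \<Rightarrow> ('v state \<Rightarrow> enat) \<times> 'v state list" where
  "proc_np d ne np DQ = (case DQ of (D, Q) \<Rightarrow>
     if D (np, ne) = \<infinity> then (D((np, ne) := d + 1), Q @ [(np, ne)]) else (D, Q))"

definition proc_ne :: "('v \<Rightarrow> 'v \<Rightarrow> bool) \<Rightarrow> 'v list \<Rightarrow> enat \<Rightarrow> ('v \<Rightarrow> 'v list list) \<Rightarrow> 'v
    \<Rightarrow> ('v state \<Rightarrow> enat) \<times> 'v state list \<Rightarrow> ('v state \<Rightarrow> enat) \<times> 'v state list" where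
  "proc_ne E sp d ordp ne DQ = (case DQ of (D, Q) \<Rightarrow>
     if (\<exists>ne'\<in>Nbr E ne. D (sp, ne') > d) then (D, Q)
     else fold (proc_np d ne) (ordp ne) (D, Q))"

text \<open>One iteration of the while loop: pop the head, then process the neighbours n_e
  (in any order) and for each admissible n_e the pursuer neighbours n_p (in any order).\<close>
inductive alg_step :: "('v \<Rightarrow> 'v \<Rightarrow> bool) \<Rightarrow> ('v state \<Rightarrow> enat) \<times> 'v state list
    \<Rightarrow> ('v state \<Rightarrow> enat) \<times> 'v state list \<Rightarrow> bool" for E where
  "distinct nes \<Longrightarrow> set nes = Nbr E se \<Longrightarrow>
   (\<forall>ne. distinct (ordp ne) \<and> set (ordp ne) = NbrP E sp) \<Longrightarrow>
   alg_step E (D, (sp, se) # Q) (fold (proc_ne E sp (D (sp, se)) ordp) nes (D, Q))"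

definition alg_output :: "('v \<Rightarrow> 'v \<Rightarrow> bool) \<Rightarrow> nat \<Rightarrow> ('v list \<Rightarrow> 'v \<Rightarrow> bool)
    \<Rightarrow> ('v state \<Rightarrow> enat) \<Rightarrow> bool" where
  "alg_output E m f D =
     (\<exists>Q0. distinct Q0 \<and> set Q0 = {s \<in> states m. f (fst s) (snd s)} \<and>
        (alg_step E)\<^sup>*\<^sup>*
          (\<lambda>s. if s \<in> states m \<and> f (fst s) (snd s) then 0 else \<infinity>, Q0) (D, []))"

definition alg_pursuer_policy :: "('v \<Rightarrow> 'v \<Rightarrow> bool) \<Rightarrow> nat \<Rightarrow> ('v state \<Rightarrow> enat)
    \<Rightarrow> ('v state \<Rightarrow> 'v list) \<Rightarrow> bool" where
  "alg_pursuer_policy E m D \<mu> =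
     (\<forall>s\<in>states m. \<mu> s \<in> NbrP E (fst s) \<and>
        (\<forall>np\<in>NbrP E (fst s).
           Max ((\<lambda>ne. D (\<mu> s, ne)) ` Nbr E (snd s)) \<le> Max ((\<lambda>ne. D (np, ne)) ` Nbr E (snd s))))"

definition alg_evader_policy :: "('v \<Rightarrow> 'v \<Rightarrow> bool) \<Rightarrow> nat \<Rightarrow> ('v state \<Rightarrow> enat)
    \<Rightarrow> ('v state \<Rightarrow> 'v) \<Rightarrow> bool" where
  "alg_evader_policy E m D \<nu> =
     (\<forall>s\<in>states m. \<nu> s \<in> Nbr E (snd s) \<and>
        (\<forall>ne\<in>Nbr E (snd s).
           Min ((\<lambda>np. D (np, ne)) ` NbrP E (fst s)) \<le> Min ((\<lambda>np. D (np, \<nu> s)) ` NbrP E (fst s))))"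

end

theory Submission
  imports Defs
begin

text \<open>The labels D computed by the queue algorithm satisfy D s = 0 at terminal states and
  D s = 1 + min_a max_b D (a, b) elsewhere, the Bellman equation of the deterministic game in
  which the pursuers move first: the algorithm is a breadth-first search, a finite label is only
  assigned where the pursuers can force the label down by one, and a popped state has labelled
  all of its predecessors.

  A label function that drops by at least one along every play bounds the discounted value from
  below by \<gamma>^D, one that drops by at most one bounds it from above. So the greedy pursuer
  policy \<mu> secures \<gamma>^D. For the evader the pure Nash equilibrium (p, q) is needed: its value
  is at most \<gamma>^D, so if some pursuer move a at s had D (a, q s) + 1 < D s, deviating to a
  and following \<mu> afterwards would beat the equilibrium. Hence no pursuer move lowers the
  label by more than one against q s, nor against the max-min move \<nu> s. Therefore (\<mu>, \<nu>) is
  a Nash equilibrium of value \<gamma>^D, and \<gamma>^D solves the Shapley equation, whose solution is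
  unique by the contraction argument.\<close>

section \<open>Expectations of bounded functions\<close>

lemma integrable_measure_pmf_bounded:
  fixes F :: "'a \<Rightarrow> real"
  assumes "\<And>x. \<bar>F x\<bar> \<le> B"
  shows "integrable (measure_pmf p) F"
  using assms by (intro measure_pmf.integrable_const_bound[where B = B]) auto

lemma pmf_expectation_mono:
  fixes F G :: "'a \<Rightarrow> real"
  assumes "\<And>x. \<bar>F x\<bar> \<le> B" "\<And>x. \<bar>G x\<bar> \<le> B" "\<And>x. x \<in> set_pmf p \<Longrightarrow> F x \<le> G x"
  shows "measure_pmf.expectation p F \<le> measure_pmf.expectation p G"
  using assms by (intro integral_mono_AE integrable_measure_pmf_bounded) (auto simp: AE_measure_pmf_iff)

lemma pmf_expectation_ge_const:
  fixes F :: "'a \<Rightarrow> real"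
  assumes "\<And>x. \<bar>F x\<bar> \<le> B" "\<And>x. x \<in> set_pmf p \<Longrightarrow> c \<le> F x"
  shows "c \<le> measure_pmf.expectation p F"
  using assms by (intro measure_pmf.integral_ge_const integrable_measure_pmf_bounded)
    (auto simp: AE_measure_pmf_iff)

lemma pmf_expectation_le_const:
  fixes F :: "'a \<Rightarrow> real"
  assumes "\<And>x. \<bar>F x\<bar> \<le> B" "\<And>x. x \<in> set_pmf p \<Longrightarrow> F x \<le> c"
  shows "measure_pmf.expectation p F \<le> c"
  using assms by (intro measure_pmf.integral_le_const integrable_measure_pmf_bounded)
    (auto simp: AE_measure_pmf_iff)

lemma abs_pmf_expectation_le:
  fixes F :: "'a \<Rightarrow> real"
  assumes "\<And>x. \<bar>F x\<bar> \<le> B" "\<And>x. x \<in> set_pmf p \<Longrightarrow> \<bar>F x\<bar> \<le> c"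
  shows "\<bar>measure_pmf.expectation p F\<bar> \<le> c"
proof -
  have "-c \<le> measure_pmf.expectation p F"
    using assms by (intro pmf_expectation_ge_const[where B = B]) (force simp: abs_le_iff)+
  moreover have "measure_pmf.expectation p F \<le> c"
    using assms by (intro pmf_expectation_le_const[where B = B]) (auto simp: abs_le_iff)
  ultimately show ?thesis
    by (simp add: abs_le_iff)
qed

lemma abs_pmf_expectation_diff_le:
  fixes F G :: "'a \<Rightarrow> real"
  assumes "\<And>x. \<bar>F x\<bar> \<le> B" "\<And>x. \<bar>G x\<bar> \<le> B" "\<And>x. x \<in> set_pmf p \<Longrightarrow> \<bar>F x - G x\<bar> \<le> c"
  shows "\<bar>measure_pmf.expectation p F - measure_pmf.expectation p G\<bar> \<le> c"
proof -
  have "\<bar>F x - G x\<bar> \<le> 2 * B" for x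
    using assms(1,2)[of x] by linarith
  then have "\<bar>measure_pmf.expectation p (\<lambda>x. F x - G x)\<bar> \<le> c"
    using assms(3) by (rule abs_pmf_expectation_le)
  moreover have "measure_pmf.expectation p (\<lambda>x. F x - G x) =
      measure_pmf.expectation p F - measure_pmf.expectation p G"
    using assms(1,2) by (intro Bochner_Integration.integral_diff integrable_measure_pmf_bounded)
  ultimately show ?thesis
    by simp
qed

lemma pmf_expectation2_ge_const:
  fixes F :: "'a \<Rightarrow> 'b \<Rightarrow> real"
  assumes "\<And>a b. \<bar>F a b\<bar> \<le> B" "\<And>a b. a \<in> set_pmf p \<Longrightarrow> b \<in> set_pmf q \<Longrightarrow> c \<le> F a b"
  shows "c \<le> measure_pmf.expectation p (\<lambda>a. measure_pmf.expectation q (F a))"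
  using assms
  by (intro pmf_expectation_ge_const[where B = B] pmf_expectation_ge_const[where B = B]
        abs_pmf_expectation_le[where B = B]) auto

lemma pmf_expectation2_le_const:
  fixes F :: "'a \<Rightarrow> 'b \<Rightarrow> real"
  assumes "\<And>a b. \<bar>F a b\<bar> \<le> B" "\<And>a b. a \<in> set_pmf p \<Longrightarrow> b \<in> set_pmf q \<Longrightarrow> F a b \<le> c"
  shows "measure_pmf.expectation p (\<lambda>a. measure_pmf.expectation q (F a)) \<le> c"
  using assms
  by (intro pmf_expectation_le_const[where B = B] pmf_expectation_le_const[where B = B]
        abs_pmf_expectation_le[where B = B]) auto

section \<open>Discounted values\<close>

lemma enat_plus_1_not_le: "d \<noteq> \<infinity> \<Longrightarrow> \<not> d + 1 \<le> (d :: enat)"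
  by (cases d) (simp_all add: one_enat_def)

lemma enat_le_plus_1: "(d :: enat) \<le> d + 1"
  by (cases d) (simp_all add: one_enat_def)

lemma enat_plus_1_finite: "d \<noteq> \<infinity> \<Longrightarrow> d + 1 \<noteq> (\<infinity> :: enat)"
  by (cases d) (simp_all add: one_enat_def)

lemma enat_le_finite: "(x :: enat) \<le> y \<Longrightarrow> y \<noteq> \<infinity> \<Longrightarrow> x \<noteq> \<infinity>"
  by (cases x) auto

lemma enat_pow_0 [simp]: "enat_pow \<gamma> 0 = 1"
  by (simp add: enat_pow_def zero_enat_def)

lemma enat_pow_plus_1: "enat_pow \<gamma> (k + 1) = \<gamma> * enat_pow \<gamma> k"
  by (cases k) (auto simp: enat_pow_def one_enat_def)

lemma enat_pow_nonneg: "0 \<le> \<gamma> \<Longrightarrow> 0 \<le> enat_pow \<gamma> k"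
  by (cases k) (auto simp: enat_pow_def)

lemma enat_pow_le_1: "0 \<le> \<gamma> \<Longrightarrow> \<gamma> \<le> 1 \<Longrightarrow> enat_pow \<gamma> k \<le> 1"
  by (cases k) (auto simp: enat_pow_def power_le_one)

lemma enat_pow_antimono: "0 \<le> \<gamma> \<Longrightarrow> \<gamma> \<le> 1 \<Longrightarrow> k \<le> l \<Longrightarrow> enat_pow \<gamma> l \<le> enat_pow \<gamma> k"
  by (cases k; cases l) (auto simp: enat_pow_def power_decreasing)

lemma enat_pow_strict_antimono: "0 < \<gamma> \<Longrightarrow> \<gamma> < 1 \<Longrightarrow> k < l \<Longrightarrow> enat_pow \<gamma> l < enat_pow \<gamma> k"
  by (cases k; cases l) (auto simp: enat_pow_def power_strict_decreasing)

lemma enat_pow_le_mult_enat_pow: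
  "0 \<le> \<gamma> \<Longrightarrow> \<gamma> \<le> 1 \<Longrightarrow> k + 1 \<le> l \<Longrightarrow> enat_pow \<gamma> l \<le> \<gamma> * enat_pow \<gamma> k"
  using enat_pow_antimono[of \<gamma> "k + 1" l] by (simp add: enat_pow_plus_1)

lemma mult_enat_pow_le_enat_pow:
  "0 \<le> \<gamma> \<Longrightarrow> \<gamma> \<le> 1 \<Longrightarrow> l \<le> k + 1 \<Longrightarrow> \<gamma> * enat_pow \<gamma> k \<le> enat_pow \<gamma> l"
  using enat_pow_antimono[of \<gamma> l "k + 1"] by (simp add: enat_pow_plus_1)

lemma val_iter_bounds:
  assumes "0 \<le> \<gamma>" "\<gamma> \<le> 1"
  shows "0 \<le> val_iter f \<gamma> \<mu> \<nu> n s \<and> val_iter f \<gamma> \<mu> \<nu> n s \<le> 1"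
proof (induction n arbitrary: s)
  case 0
  then show ?case by simp
next
  case (Suc n)
  let ?EE = "measure_pmf.expectation (\<mu> s)
    (\<lambda>a. measure_pmf.expectation (\<nu> s) (\<lambda>b. val_iter f \<gamma> \<mu> \<nu> n (a, b)))"
  have bounded: "\<bar>val_iter f \<gamma> \<mu> \<nu> n x\<bar> \<le> 1" for x
    using Suc.IH[of x] by simp
  have "0 \<le> ?EE"
    using Suc.IH bounded by (intro pmf_expectation2_ge_const[where B = 1]) auto
  moreover have "?EE \<le> 1"
    using Suc.IH bounded by (intro pmf_expectation2_le_const[where B = 1]) auto
  ultimately show ?case
    using assms by (simp add: mult_le_one)
qed

lemma abs_val_iter_le_1: "0 \<le> \<gamma> \<Longrightarrow> \<gamma> \<le> 1 \<Longrightarrow> \<bar>val_iter f \<gamma> \<mu> \<nu> n s\<bar> \<le> 1"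
  using val_iter_bounds[of \<gamma> f \<mu> \<nu> n s] by simp

lemma val_iter_Suc_mono:
  assumes "0 \<le> \<gamma>" "\<gamma> \<le> 1"
  shows "val_iter f \<gamma> \<mu> \<nu> n s \<le> val_iter f \<gamma> \<mu> \<nu> (Suc n) s"
proof (induction n arbitrary: s)
  case 0
  then show ?case
    using val_iter_bounds[OF assms, of f \<mu> \<nu> 1 s] by simp
next
  case (Suc n)
  let ?E = "\<lambda>k a. measure_pmf.expectation (\<nu> s) (\<lambda>b. val_iter f \<gamma> \<mu> \<nu> k (a, b))"
  have bounded: "\<bar>?E k a\<bar> \<le> 1" for k a
    using assms by (intro abs_pmf_expectation_le[where B = 1] abs_val_iter_le_1)
  have "?E n a \<le> ?E (Suc n) a" for a
    using assms by (intro pmf_expectation_mono[where B = 1] abs_val_iter_le_1 Suc.IH)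
  then have "measure_pmf.expectation (\<mu> s) (?E n) \<le> measure_pmf.expectation (\<mu> s) (?E (Suc n))"
    by (rule pmf_expectation_mono[OF bounded bounded])
  then show ?case
    using assms by (simp add: mult_left_mono)
qed

lemma val_iter_tendsto_policy_value:
  assumes "0 \<le> \<gamma>" "\<gamma> \<le> 1"
  shows "(\<lambda>n. val_iter f \<gamma> \<mu> \<nu> n s) \<longlonglongrightarrow> policy_value f \<gamma> \<mu> \<nu> s"
proof -
  have "incseq (\<lambda>n. val_iter f \<gamma> \<mu> \<nu> n s)"
    using assms by (intro incseq_SucI val_iter_Suc_mono)
  moreover have "Bseq (\<lambda>n. val_iter f \<gamma> \<mu> \<nu> n s)"
    using assms by (intro BseqI'[where K = 1]) (simp add: abs_val_iter_le_1)
  ultimately have "convergent (\<lambda>n. val_iter f \<gamma> \<mu> \<nu> n s)"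
    using Bseq_monoseq_convergent monoseq_iff by blast
  then show ?thesis
    unfolding policy_value_def by (simp add: convergent_LIMSEQ_iff)
qed

lemma enat_pow_le_policy_value:
  assumes \<gamma>: "0 < \<gamma>" "\<gamma> < 1"
    and decreasing: "\<And>s a b. s \<in> S \<Longrightarrow> \<not> f (fst s) (snd s) \<Longrightarrow> a \<in> set_pmf (\<mu> s) \<Longrightarrow>
      b \<in> set_pmf (\<nu> s) \<Longrightarrow> (a, b) \<in> S \<and> h (a, b) + 1 \<le> h s"
    and "s \<in> S"
  shows "enat_pow \<gamma> (h s) \<le> policy_value f \<gamma> \<mu> \<nu> s"
proof -
  have approx: "enat_pow \<gamma> (h s) - \<gamma> ^ n \<le> val_iter f \<gamma> \<mu> \<nu> n s" if "s \<in> S" for n s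
    using that
  proof (induction n arbitrary: s)
    case 0
    then show ?case
      using \<gamma> enat_pow_le_1[of \<gamma>] by simp
  next
    case (Suc n)
    let ?c = "enat_pow \<gamma> (h s) - \<gamma> ^ Suc n"
    have "?c / \<gamma> \<le> measure_pmf.expectation (\<mu> s)
        (\<lambda>a. measure_pmf.expectation (\<nu> s) (\<lambda>b. val_iter f \<gamma> \<mu> \<nu> n (a, b)))"
      if "\<not> f (fst s) (snd s)"
    proof (rule pmf_expectation2_ge_const[where B = 1])
      fix a b
      assume "a \<in> set_pmf (\<mu> s)" "b \<in> set_pmf (\<nu> s)"
      with decreasing Suc.prems that have "(a, b) \<in> S" "h (a, b) + 1 \<le> h s"
        by auto
      then have "?c \<le> \<gamma> * (enat_pow \<gamma> (h (a, b)) - \<gamma> ^ n)"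
        using \<gamma> enat_pow_le_mult_enat_pow[of \<gamma> "h (a, b)" "h s"] by (simp add: algebra_simps)
      also have "\<dots> \<le> \<gamma> * val_iter f \<gamma> \<mu> \<nu> n (a, b)"
        using Suc.IH[OF \<open>(a, b) \<in> S\<close>] \<gamma> by simp
      finally show "?c / \<gamma> \<le> val_iter f \<gamma> \<mu> \<nu> n (a, b)"
        using \<gamma> by (simp add: pos_divide_le_eq mult.commute)
    qed (use \<gamma> in \<open>simp add: abs_val_iter_le_1\<close>)
    moreover have "?c \<le> 1"
      using \<gamma> enat_pow_le_1[of \<gamma> "h s"] zero_le_power[of \<gamma> "Suc n"] by linarith
    ultimately show ?case
      using \<gamma> by (auto simp: pos_divide_le_eq mult.commute simp del: power_Suc)
  qed
  have "(\<lambda>n. enat_pow \<gamma> (h s) - \<gamma> ^ n) \<longlonglongrightarrow> enat_pow \<gamma> (h s) - 0"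
    using \<gamma> by (intro tendsto_diff tendsto_const LIMSEQ_power_zero) auto
  from LIMSEQ_le[OF this val_iter_tendsto_policy_value[of \<gamma> f \<mu> \<nu> s]] show ?thesis
    using approx \<open>s \<in> S\<close> \<gamma> by auto
qed

lemma policy_value_le_enat_pow:
  assumes \<gamma>: "0 < \<gamma>" "\<gamma> < 1"
    and terminal: "\<And>s. s \<in> S \<Longrightarrow> f (fst s) (snd s) \<Longrightarrow> h s = 0"
    and nonincreasing: "\<And>s a b. s \<in> S \<Longrightarrow> \<not> f (fst s) (snd s) \<Longrightarrow> a \<in> set_pmf (\<mu> s) \<Longrightarrow>
      b \<in> set_pmf (\<nu> s) \<Longrightarrow> (a, b) \<in> S \<and> h s \<le> h (a, b) + 1"
    and "s \<in> S"
  shows "policy_value f \<gamma> \<mu> \<nu> s \<le> enat_pow \<gamma> (h s)"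
proof -
  have approx: "val_iter f \<gamma> \<mu> \<nu> n s \<le> enat_pow \<gamma> (h s) + \<gamma> ^ n" if "s \<in> S" for n s
    using that
  proof (induction n arbitrary: s)
    case 0
    then show ?case
      using \<gamma> enat_pow_nonneg[of \<gamma>] by simp
  next
    case (Suc n)
    let ?c = "enat_pow \<gamma> (h s) + \<gamma> ^ Suc n"
    have "measure_pmf.expectation (\<mu> s)
        (\<lambda>a. measure_pmf.expectation (\<nu> s) (\<lambda>b. val_iter f \<gamma> \<mu> \<nu> n (a, b))) \<le> ?c / \<gamma>"
      if "\<not> f (fst s) (snd s)"
    proof (rule pmf_expectation2_le_const[where B = 1])
      fix a b
      assume "a \<in> set_pmf (\<mu> s)" "b \<in> set_pmf (\<nu> s)"
      with nonincreasing Suc.prems that have "(a, b) \<in> S" "h s \<le> h (a, b) + 1"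
        by auto
      have "\<gamma> * val_iter f \<gamma> \<mu> \<nu> n (a, b) \<le> \<gamma> * (enat_pow \<gamma> (h (a, b)) + \<gamma> ^ n)"
        using Suc.IH[OF \<open>(a, b) \<in> S\<close>] \<gamma> by simp
      also have "\<dots> \<le> ?c"
        using \<gamma> mult_enat_pow_le_enat_pow[of \<gamma> "h s" "h (a, b)"] \<open>h s \<le> h (a, b) + 1\<close>
        by (simp add: algebra_simps)
      finally show "val_iter f \<gamma> \<mu> \<nu> n (a, b) \<le> ?c / \<gamma>"
        using \<gamma> by (simp add: pos_le_divide_eq mult.commute)
    qed (use \<gamma> in \<open>simp add: abs_val_iter_le_1\<close>)
    then show ?case
      using \<gamma> terminal[OF Suc.prems] by (auto simp: pos_le_divide_eq mult.commute)
  qed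
  have "(\<lambda>n. enat_pow \<gamma> (h s) + \<gamma> ^ n) \<longlonglongrightarrow> enat_pow \<gamma> (h s) + 0"
    using \<gamma> by (intro tendsto_add tendsto_const LIMSEQ_power_zero) auto
  from LIMSEQ_le[OF val_iter_tendsto_policy_value[of \<gamma> f \<mu> \<nu> s] this] show ?thesis
    using approx \<open>s \<in> S\<close> \<gamma> by auto
qed

lemma self_in_Nbr: "v \<in> Nbr E v"
  by (simp add: Nbr_def)

lemma Nbr_nonempty: "Nbr E v \<noteq> {}"
  using self_in_Nbr[of v E] by blast

lemma Nbr_sym: "symp E \<Longrightarrow> u \<in> Nbr E v \<Longrightarrow> v \<in> Nbr E u"
  by (auto simp: Nbr_def dest: sympD)

lemma self_in_NbrP: "sp \<in> NbrP E sp"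
  by (simp add: NbrP_def self_in_Nbr)

lemma NbrP_nonempty: "NbrP E sp \<noteq> {}"
  using self_in_NbrP[of sp E] by blast

lemma length_NbrP: "a \<in> NbrP E sp \<Longrightarrow> length a = length sp"
  by (simp add: NbrP_def)

lemma NbrP_sym: "symp E \<Longrightarrow> a \<in> NbrP E sp \<Longrightarrow> sp \<in> NbrP E a"
  by (auto simp: NbrP_def intro: Nbr_sym)

lemma finite_NbrP: "finite (NbrP (E :: 'v::finite \<Rightarrow> 'v \<Rightarrow> bool) sp)"
proof (rule finite_subset)
  show "NbrP E sp \<subseteq> {xs. set xs \<subseteq> UNIV \<and> length xs = length sp}"
    by (auto simp: NbrP_def)
qed (rule finite_lists_length_eq, simp)

lemma finite_states: "finite (states m :: 'v::finite state set)"
proof (rule finite_subset)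
  show "states m \<subseteq> {xs :: 'v list. set xs \<subseteq> UNIV \<and> length xs = m} \<times> UNIV"
    by (auto simp: states_def)
qed (intro finite_cartesian_product finite_lists_length_eq; simp)

lemma states_nonempty: "states m \<noteq> {}"
proof -
  have "(replicate m undefined, undefined) \<in> states m"
    by (simp add: states_def)
  then show ?thesis
    by blast
qed

lemma NbrP_in_states: "s \<in> states m \<Longrightarrow> a \<in> NbrP E (fst s) \<Longrightarrow> (a, b) \<in> states m"
  by (simp add: states_def length_NbrP)

section \<open>The Nash value\<close>

lemma abs_Min_image_diff_le:
  fixes F G :: "'a \<Rightarrow> real"
  assumes "finite A" "A \<noteq> {}" "\<And>x. x \<in> A \<Longrightarrow> \<bar>F x - G x\<bar> \<le> c"
  shows "\<bar>Min (F ` A) - Min (G ` A)\<bar> \<le> c"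
proof -
  have "Min (F ` A) \<in> F ` A" "Min (G ` A) \<in> G ` A"
    using assms(1,2) by (intro Min_in; simp)+
  then obtain x y where x: "x \<in> A" "Min (F ` A) = F x" and y: "y \<in> A" "Min (G ` A) = G y"
    by (metis imageE)
  have "F x \<le> F y" "G y \<le> G x"
    using x y assms(1) by (metis Min_le finite_imageI image_eqI)+
  with assms(3)[OF x(1)] assms(3)[OF y(1)] x(2) y(2) show ?thesis
    by (simp add: abs_le_iff)
qed

lemma abs_Sup_image_diff_le:
  fixes F G :: "'a \<Rightarrow> real"
  assumes "A \<noteq> {}" "bdd_above (F ` A)" "bdd_above (G ` A)"
    and "\<And>x. x \<in> A \<Longrightarrow> \<bar>F x - G x\<bar> \<le> c"
  shows "\<bar>Sup (F ` A) - Sup (G ` A)\<bar> \<le> c"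
proof -
  have "F x \<le> Sup (G ` A) + c" if "x \<in> A" for x
    using cSUP_upper[OF that assms(3)] assms(4)[OF that] by (simp add: abs_le_iff)
  then have "Sup (F ` A) \<le> Sup (G ` A) + c"
    using assms(1) by (rule cSUP_least[rotated])
  moreover have "G x \<le> Sup (F ` A) + c" if "x \<in> A" for x
    using cSUP_upper[OF that assms(2)] assms(4)[OF that] by (simp add: abs_le_iff)
  then have "Sup (G ` A) \<le> Sup (F ` A) + c"
    using assms(1) by (rule cSUP_least[rotated])
  ultimately show ?thesis
    by (simp add: abs_le_iff)
qed

lemma bounded_if_zero_outside_finite:
  fixes V :: "'a \<Rightarrow> real"
  assumes "finite S" "\<And>x. x \<notin> S \<Longrightarrow> V x = 0"
  obtains B where "\<And>x. \<bar>V x\<bar> \<le> B"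
proof
  fix x
  show "\<bar>V x\<bar> \<le> Max (insert 0 ((\<lambda>x. \<bar>V x\<bar>) ` S))"
    using assms by (cases "x \<in> S") auto
qed

lemma shapley_rhs_contraction:
  fixes E :: "'v::finite \<Rightarrow> 'v \<Rightarrow> bool"
  assumes "0 \<le> \<gamma>"
    and bounded: "\<And>x. \<bar>V x\<bar> \<le> B" "\<And>x. \<bar>W x\<bar> \<le> B"
    and close: "\<And>s. s \<in> states m \<Longrightarrow> \<bar>V s - W s\<bar> \<le> \<delta>"
    and s: "s \<in> states m"
  shows "\<bar>shapley_rhs E f \<gamma> V s - shapley_rhs E f \<gamma> W s\<bar> \<le> \<gamma> * \<delta>"
proof (cases "f (fst s) (snd s)")
  case True
  then show ?thesis
    using close[OF s] assms(1) by (simp add: shapley_rhs_def)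
next
  case False
  define P where "P = {p. set_pmf p \<subseteq> NbrP E (fst s)}"
  define N where "N = Nbr E (snd s)"
  define F where "F (U :: 'v state \<Rightarrow> real) p b = \<gamma> * measure_pmf.expectation p (\<lambda>a. U (a, b))" for U p b
  have rhs: "shapley_rhs E f \<gamma> U s = Sup ((\<lambda>p. Min (F U p ` N)) ` P)" for U
    using False by (simp add: shapley_rhs_def F_def P_def N_def)
  have N: "finite N" "N \<noteq> {}"
    by (simp_all add: N_def Nbr_nonempty)
  have "F U p b \<le> \<gamma> * B" if "\<And>x. \<bar>U x\<bar> \<le> B" for U p b
    using abs_pmf_expectation_le[of "\<lambda>a. U (a, b)" B p B] that assms(1)
    by (simp add: F_def abs_le_iff mult_left_mono)
  moreover have "Min (F U p ` N) \<le> F U p (snd s)" for U p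
    using N by (simp add: N_def self_in_Nbr)
  ultimately have "Min (F U p ` N) \<le> \<gamma> * B" if "\<And>x. \<bar>U x\<bar> \<le> B" for U p
    using that order.trans by blast
  then have bdd: "bdd_above ((\<lambda>p. Min (F U p ` N)) ` P)" if "\<And>x. \<bar>U x\<bar> \<le> B" for U
    using that by (intro bdd_aboveI2) blast
  have "\<bar>F V p b - F W p b\<bar> \<le> \<gamma> * \<delta>" if "p \<in> P" for p b
  proof -
    have "\<bar>measure_pmf.expectation p (\<lambda>a. V (a, b)) - measure_pmf.expectation p (\<lambda>a. W (a, b))\<bar> \<le> \<delta>"
      using that bounded close s
      by (intro abs_pmf_expectation_diff_le[where B = B]) (auto simp: P_def NbrP_in_states)
    then show ?thesis
      using assms(1) by (simp add: F_def abs_mult mult_left_mono flip: right_diff_distrib)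
  qed
  then have "\<bar>Min (F V p ` N) - Min (F W p ` N)\<bar> \<le> \<gamma> * \<delta>" if "p \<in> P" for p
    using N that by (intro abs_Min_image_diff_le)
  moreover have "P \<noteq> {}"
    using self_in_NbrP[of "fst s" E] by (auto simp: P_def intro!: exI[of _ "return_pmf (fst s)"])
  ultimately show ?thesis
    using bdd bounded by (simp add: rhs abs_Sup_image_diff_le)
qed

lemma is_nash_value_unique:
  fixes E :: "'v::finite \<Rightarrow> 'v \<Rightarrow> bool"
  assumes \<gamma>: "0 < \<gamma>" "\<gamma> < 1"
    and V: "is_nash_value E m f \<gamma> V" and W: "is_nash_value E m f \<gamma> W"
  shows "V = W"
proof -
  obtain BV BW where "\<And>x. \<bar>V x\<bar> \<le> BV" "\<And>x. \<bar>W x\<bar> \<le> BW"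
    using V W finite_states bounded_if_zero_outside_finite unfolding is_nash_value_def by metis
  then have bounded: "\<bar>V x\<bar> \<le> max BV BW" "\<bar>W x\<bar> \<le> max BV BW" for x
    by (meson max.coboundedI1 max.coboundedI2 order_trans)+
  define \<delta> where "\<delta> = Max ((\<lambda>s. \<bar>V s - W s\<bar>) ` states m)"
  have close: "\<bar>V s - W s\<bar> \<le> \<delta>" if "s \<in> states m" for s
    using that finite_states unfolding \<delta>_def by (intro Max_ge) auto
  have "\<delta> \<in> (\<lambda>s. \<bar>V s - W s\<bar>) ` states m"
    unfolding \<delta>_def using finite_states states_nonempty by (intro Max_in) auto
  then obtain s where "s \<in> states m" "\<delta> = \<bar>V s - W s\<bar>"
    by blast
  moreover have "\<bar>V s - W s\<bar> \<le> \<gamma> * \<delta>" if "s \<in> states m" for s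
    using shapley_rhs_contraction[OF _ bounded close that] V W that \<gamma>
    by (simp add: is_nash_value_def)
  ultimately have "(1 - \<gamma>) * \<delta> \<le> 0"
    by (simp add: algebra_simps)
  then have "\<delta> \<le> 0"
    using \<gamma> by (simp add: mult_le_0_iff)
  then have "V s = W s" if "s \<in> states m" for s
    using close[OF that] by simp
  moreover have "V s = W s" if "s \<notin> states m" for s
    using V W that unfolding is_nash_value_def by metis
  ultimately show ?thesis
    by blast
qed

lemma nash_value_eqI:
  fixes E :: "'v::finite \<Rightarrow> 'v \<Rightarrow> bool"
  assumes "0 < \<gamma>" "\<gamma> < 1" "is_nash_value E m f \<gamma> V"
  shows "nash_value E m f \<gamma> = V"
  unfolding nash_value_def using assms is_nash_value_unique by blast

lemma shapley_rhs_eq_saddle: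
  fixes E :: "'v::finite \<Rightarrow> 'v \<Rightarrow> bool"
  assumes \<gamma>: "0 < \<gamma>" and "\<not> f (fst s) (snd s)" and bounded: "\<And>x. \<bar>V x\<bar> \<le> B"
    and a0: "a0 \<in> NbrP E (fst s)" "\<And>b. b \<in> Nbr E (snd s) \<Longrightarrow> v \<le> \<gamma> * V (a0, b)"
    and b0: "b0 \<in> Nbr E (snd s)" "\<And>a. a \<in> NbrP E (fst s) \<Longrightarrow> \<gamma> * V (a, b0) \<le> v"
  shows "shapley_rhs E f \<gamma> V s = v"
proof -
  define P where "P = {p. set_pmf p \<subseteq> NbrP E (fst s)}"
  define A where "A p = Min ((\<lambda>b. \<gamma> * measure_pmf.expectation p (\<lambda>a. V (a, b))) ` Nbr E (snd s))"
    for p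
  have "A p \<le> v" if "p \<in> P" for p
  proof -
    have "A p \<le> \<gamma> * measure_pmf.expectation p (\<lambda>a. V (a, b0))"
      using b0(1) unfolding A_def by (intro Min_le) auto
    also have "measure_pmf.expectation p (\<lambda>a. V (a, b0)) \<le> v / \<gamma>"
      using b0(2) that bounded \<gamma>
      by (intro pmf_expectation_le_const[where B = B]) (auto simp: P_def pos_le_divide_eq mult.commute)
    then have "\<gamma> * measure_pmf.expectation p (\<lambda>a. V (a, b0)) \<le> v"
      using \<gamma> by (simp add: pos_le_divide_eq mult.commute)
    finally show ?thesis .
  qed
  moreover have "v \<le> A (return_pmf a0)"
    using a0(2) by (simp add: A_def Nbr_nonempty)
  moreover have "return_pmf a0 \<in> P"
    using a0(1) by (simp add: P_def)
  ultimately have "Sup (A ` P) = v"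
    by (intro cSup_eq_maximum) (auto intro: antisym image_eqI)
  with assms(2) show ?thesis
    by (simp add: shapley_rhs_def A_def P_def)
qed

section \<open>The queue algorithm\<close>

definition pushable :: "('v \<Rightarrow> 'v \<Rightarrow> bool) \<Rightarrow> 'v list \<Rightarrow> enat \<Rightarrow> ('v state \<Rightarrow> enat) \<Rightarrow> 'v state \<Rightarrow> bool"
  where "pushable E sp d D s \<longleftrightarrow> fst s \<in> NbrP E sp \<and> (\<forall>ne'\<in>Nbr E (snd s). D (sp, ne') \<le> d)"

fun bfs_extends :: "('v \<Rightarrow> 'v \<Rightarrow> bool) \<Rightarrow> 'v list \<Rightarrow> enat
    \<Rightarrow> ('v state \<Rightarrow> enat) \<times> 'v state list \<Rightarrow> ('v state \<Rightarrow> enat) \<times> 'v state list \<Rightarrow> bool"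
  where "bfs_extends E sp d (D, Q) (D', Q') \<longleftrightarrow>
    (\<exists>R. Q' = Q @ R \<and> (\<forall>s\<in>set R. D s = \<infinity> \<and> D' s = d + 1 \<and> pushable E sp d D' s) \<and>
      (\<forall>s. s \<notin> set R \<longrightarrow> D' s = D s))"

lemma bfs_extends_keeps_finite_label:
  "bfs_extends E sp d (D, Q) (D', Q') \<Longrightarrow> D s \<noteq> \<infinity> \<Longrightarrow> D' s = D s"
  by (metis bfs_extends.simps)

lemma bfs_extends_new_label_le:
  "d \<noteq> \<infinity> \<Longrightarrow> bfs_extends E sp d (D, Q) (D', Q') \<Longrightarrow> D' s \<le> d \<Longrightarrow> D s = D' s"
  by (metis bfs_extends.simps enat_plus_1_not_le)

lemma bfs_extends_keeps_label_le:
  "d \<noteq> \<infinity> \<Longrightarrow> bfs_extends E sp d (D, Q) (D', Q') \<Longrightarrow> D s \<le> d \<Longrightarrow> D' s = D s"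
  using bfs_extends_keeps_finite_label[of E sp d D Q D' Q' s] by force

lemma pushable_mono:
  "d \<noteq> \<infinity> \<Longrightarrow> bfs_extends E sp d (D, Q) (D', Q') \<Longrightarrow> pushable E sp d D s \<Longrightarrow> pushable E sp d D' s"
  unfolding pushable_def by (metis bfs_extends_keeps_label_le)

lemma bfs_extends_trans:
  assumes "d \<noteq> \<infinity>" "bfs_extends E sp d (D, Q) (D1, Q1)" "bfs_extends E sp d (D1, Q1) (D2, Q2)"
  shows "bfs_extends E sp d (D, Q) (D2, Q2)"
proof -
  obtain R1 where R1: "Q1 = Q @ R1" "\<forall>s\<in>set R1. D s = \<infinity> \<and> D1 s = d + 1 \<and> pushable E sp d D1 s"
    "\<forall>s. s \<notin> set R1 \<longrightarrow> D1 s = D s"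
    using assms(2) by auto
  obtain R2 where R2: "Q2 = Q1 @ R2" "\<forall>s\<in>set R2. D1 s = \<infinity> \<and> D2 s = d + 1 \<and> pushable E sp d D2 s"
    "\<forall>s. s \<notin> set R2 \<longrightarrow> D2 s = D1 s"
    using assms(3) by auto
  have "d + 1 \<noteq> \<infinity>"
    using enat_plus_1_finite[OF assms(1)] .
  then have "set R1 \<inter> set R2 = {}"
    using R1(2) R2(2) by fastforce
  then have "\<forall>s\<in>set (R1 @ R2). D s = \<infinity> \<and> D2 s = d + 1 \<and> pushable E sp d D2 s"
    using R1 R2 pushable_mono[OF assms(1,3)] by fastforce
  moreover have "\<forall>s. s \<notin> set (R1 @ R2) \<longrightarrow> D2 s = D s"
    using R1(3) R2(3) by simp
  ultimately show ?thesis
    using R1(1) R2(1) by auto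
qed

lemma proc_np_extends:
  assumes d: "d \<noteq> \<infinity>" and "np \<in> NbrP E sp" "\<forall>ne'\<in>Nbr E ne. D (sp, ne') \<le> d"
    and "proc_np d ne np (D, Q) = (D', Q')"
  shows "bfs_extends E sp d (D, Q) (D', Q') \<and> D' (np, ne) \<noteq> \<infinity>"
proof (cases "D (np, ne) = \<infinity>")
  case True
  have "pushable E sp d (D((np, ne) := d + 1)) (np, ne)"
    using assms True by (auto simp: pushable_def)
  with assms True show ?thesis
    by (auto simp: proc_np_def plus_eq_infty_iff_enat one_enat_def intro!: exI[of _ "[(np, ne)]"])
next
  case False
  with assms show ?thesis
    by (auto simp: proc_np_def)
qed

lemma fold_proc_np_extends:
  assumes d: "d \<noteq> \<infinity>"
  shows "set nps \<subseteq> NbrP E sp \<Longrightarrow> \<forall>ne'\<in>Nbr E ne. D (sp, ne') \<le> d \<Longrightarrow>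
    fold (proc_np d ne) nps (D, Q) = (D', Q') \<Longrightarrow>
    bfs_extends E sp d (D, Q) (D', Q') \<and> (\<forall>np\<in>set nps. D' (np, ne) \<noteq> \<infinity>)"
proof (induction nps arbitrary: D Q)
  case Nil
  then show ?case by auto
next
  case (Cons np nps)
  obtain D1 Q1 where step: "proc_np d ne np (D, Q) = (D1, Q1)"
    by fastforce
  have ext: "bfs_extends E sp d (D, Q) (D1, Q1)" and "D1 (np, ne) \<noteq> \<infinity>"
    using proc_np_extends[OF d _ _ step] Cons.prems(1,2) by auto
  moreover have "\<forall>ne'\<in>Nbr E ne. D1 (sp, ne') \<le> d"
    using Cons.prems(2) bfs_extends_keeps_label_le[OF d ext] by simp
  then have ext2: "bfs_extends E sp d (D1, Q1) (D', Q')" and "\<forall>np\<in>set nps. D' (np, ne) \<noteq> \<infinity>"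
    using Cons.IH[of D1 Q1] Cons.prems(1,3) step by auto
  ultimately show ?case
    using bfs_extends_trans[OF d ext ext2] bfs_extends_keeps_finite_label[OF ext2] by auto
qed

lemma proc_ne_extends:
  assumes d: "d \<noteq> \<infinity>" and "set (ordp ne) = NbrP E sp"
    and "proc_ne E sp d ordp ne (D, Q) = (D', Q')"
  shows "bfs_extends E sp d (D, Q) (D', Q') \<and>
    ((\<forall>ne'\<in>Nbr E ne. D (sp, ne') \<le> d) \<longrightarrow> (\<forall>np\<in>NbrP E sp. D' (np, ne) \<noteq> \<infinity>))"
proof (cases "\<exists>ne'\<in>Nbr E ne. D (sp, ne') > d")
  case True
  with assms(3) have "D' = D" "Q' = Q"
    by (simp_all add: proc_ne_def)
  with True show ?thesis
    by (auto simp: not_le)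
next
  case False
  with assms(3) have "fold (proc_np d ne) (ordp ne) (D, Q) = (D', Q')"
    by (simp add: proc_ne_def)
  from fold_proc_np_extends[OF d _ _ this, where E = E and sp = sp] False assms(2) show ?thesis
    by (simp add: not_less)
qed

lemma fold_proc_ne_extends:
  assumes d: "d \<noteq> \<infinity>" and ord: "\<forall>ne. set (ordp ne) = NbrP E sp"
  shows "fold (proc_ne E sp d ordp) nes (D, Q) = (D', Q') \<Longrightarrow>
    bfs_extends E sp d (D, Q) (D', Q') \<and>
    (\<forall>ne\<in>set nes. (\<forall>ne'\<in>Nbr E ne. D' (sp, ne') \<le> d) \<longrightarrow> (\<forall>np\<in>NbrP E sp. D' (np, ne) \<noteq> \<infinity>))"
proof (induction nes arbitrary: D Q)
  case Nil
  then show ?case by auto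
next
  case (Cons ne nes)
  obtain D1 Q1 where step: "proc_ne E sp d ordp ne (D, Q) = (D1, Q1)"
    by fastforce
  have ext1: "bfs_extends E sp d (D, Q) (D1, Q1)"
    and new: "(\<forall>ne'\<in>Nbr E ne. D (sp, ne') \<le> d) \<Longrightarrow> (\<forall>np\<in>NbrP E sp. D1 (np, ne) \<noteq> \<infinity>)"
    using proc_ne_extends[OF d ord[rule_format] step] by blast+
  have ext2: "bfs_extends E sp d (D1, Q1) (D', Q')"
    and IH: "\<forall>ne\<in>set nes. (\<forall>ne'\<in>Nbr E ne. D' (sp, ne') \<le> d) \<longrightarrow> (\<forall>np\<in>NbrP E sp. D' (np, ne) \<noteq> \<infinity>)"
    using Cons.IH[of D1 Q1] Cons.prems step by simp_all
  have ext: "bfs_extends E sp d (D, Q) (D', Q')"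
    using bfs_extends_trans[OF d ext1 ext2] .
  have "D' (np, ne) \<noteq> \<infinity>" if "\<forall>ne'\<in>Nbr E ne. D' (sp, ne') \<le> d" "np \<in> NbrP E sp" for np
  proof -
    have "D (sp, ne') \<le> d" if "ne' \<in> Nbr E ne" for ne'
      using \<open>\<forall>ne'\<in>Nbr E ne. D' (sp, ne') \<le> d\<close> that bfs_extends_new_label_le[OF d ext, of "(sp, ne')"]
      by simp
    then have "D1 (np, ne) \<noteq> \<infinity>"
      using new \<open>np \<in> NbrP E sp\<close> by blast
    then show ?thesis
      using bfs_extends_keeps_finite_label[OF ext2] by simp
  qed
  with ext IH show ?case
    by simp
qed

text \<open>One iteration of the main loop: (sp, se) is popped and the states in R are pushed with
  label D (sp, se) + 1.\<close>

locale bfs_step =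
  fixes E :: "'v \<Rightarrow> 'v \<Rightarrow> bool" and sp :: "'v list" and se :: 'v
    and D D' :: "'v state \<Rightarrow> enat" and R :: "'v state list"
  assumes popped_finite: "D (sp, se) \<noteq> \<infinity>"
    and pushed: "\<And>s. s \<in> set R \<Longrightarrow>
      D s = \<infinity> \<and> D' s = D (sp, se) + 1 \<and> pushable E sp (D (sp, se)) D' s"
    and unchanged: "\<And>s. s \<notin> set R \<Longrightarrow> D' s = D s"
    and complete: "\<And>ne np. ne \<in> Nbr E se \<Longrightarrow> \<forall>ne'\<in>Nbr E ne. D' (sp, ne') \<le> D (sp, se) \<Longrightarrow>
      np \<in> NbrP E sp \<Longrightarrow> D' (np, ne) \<noteq> \<infinity>"

lemma alg_step_bfs_step:
  assumes "alg_step E (D, Q) (D', Q')" "\<forall>s\<in>set Q. D s \<noteq> \<infinity>"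
  obtains sp se Q0 R where "Q = (sp, se) # Q0" "Q' = Q0 @ R" "bfs_step E sp se D D' R"
  using assms(1)
proof cases
  case (1 nes se ordp sp Q0)
  let ?d = "D (sp, se)"
  have "?d \<noteq> \<infinity>"
    using assms(2) 1 by simp
  moreover have "\<forall>ne. set (ordp ne) = NbrP E sp"
    using 1(5) by blast
  ultimately have ext: "bfs_extends E sp ?d (D, Q0) (D', Q')" and
    "\<forall>ne\<in>Nbr E se. (\<forall>ne'\<in>Nbr E ne. D' (sp, ne') \<le> ?d) \<longrightarrow> (\<forall>np\<in>NbrP E sp. D' (np, ne) \<noteq> \<infinity>)"
    using fold_proc_ne_extends[of ?d ordp E sp nes D Q0 D' Q'] 1(2,4) by auto
  moreover obtain R where "Q' = Q0 @ R" "\<forall>s\<in>set R. D s = \<infinity> \<and> D' s = ?d + 1 \<and> pushable E sp ?d D' s"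
    "\<forall>s. s \<notin> set R \<longrightarrow> D' s = D s"
    using ext by auto
  ultimately show thesis
    using 1(1) \<open>?d \<noteq> \<infinity>\<close> by (intro that[of sp se Q0 R]) (simp_all add: bfs_step_def)
qed

definition sound_labels :: "('v \<Rightarrow> 'v \<Rightarrow> bool) \<Rightarrow> nat \<Rightarrow> ('v list \<Rightarrow> 'v \<Rightarrow> bool) \<Rightarrow> ('v state \<Rightarrow> enat) \<Rightarrow> bool"
  where "sound_labels E m f D \<longleftrightarrow> (\<forall>s\<in>states m. f (fst s) (snd s) \<longrightarrow> D s = 0) \<and>
    (\<forall>s. D s \<noteq> \<infinity> \<longrightarrow> \<not> f (fst s) (snd s) \<longrightarrow>
      (\<exists>a\<in>NbrP E (fst s). \<forall>b\<in>Nbr E (snd s). D (a, b) + 1 \<le> D s))"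

text \<open>The invariant of a state that has left the queue. For symmetric E it yields
  D s \<le> 1 + max_b D (a, b) for every pursuer move a (lemma label_le_Max_plus_1).\<close>

definition processed :: "('v \<Rightarrow> 'v \<Rightarrow> bool) \<Rightarrow> ('v state \<Rightarrow> enat) \<Rightarrow> 'v state \<Rightarrow> bool"
  where "processed E D p \<longleftrightarrow> (\<forall>ne\<in>Nbr E (snd p). (\<forall>ne'\<in>Nbr E ne. D (fst p, ne') \<le> D p) \<longrightarrow>
    (\<forall>np\<in>NbrP E (fst p). D (np, ne) \<le> D p + 1))"

definition bfs_queue_inv :: "('v \<Rightarrow> 'v \<Rightarrow> bool) \<Rightarrow> ('v state \<Rightarrow> enat) \<Rightarrow> 'v state list \<Rightarrow> bool"
  where "bfs_queue_inv E D Q \<longleftrightarrow> (\<forall>s\<in>set Q. D s \<noteq> \<infinity>) \<and> sorted (map D Q) \<and>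
    (\<forall>x\<in>set Q. \<forall>y\<in>set Q. D y \<le> D x + 1) \<and>
    (\<forall>p. D p \<noteq> \<infinity> \<longrightarrow> p \<notin> set Q \<longrightarrow> (\<forall>x\<in>set Q. D p \<le> D x) \<and> processed E D p)"

lemma bfs_queue_invD:
  assumes "bfs_queue_inv E D Q"
  shows "s \<in> set Q \<Longrightarrow> D s \<noteq> \<infinity>"
    and "sorted (map D Q)"
    and "x \<in> set Q \<Longrightarrow> y \<in> set Q \<Longrightarrow> D y \<le> D x + 1"
    and "D p \<noteq> \<infinity> \<Longrightarrow> p \<notin> set Q \<Longrightarrow> x \<in> set Q \<Longrightarrow> D p \<le> D x"
    and "D p \<noteq> \<infinity> \<Longrightarrow> p \<notin> set Q \<Longrightarrow> processed E D p"
  using assms unfolding bfs_queue_inv_def by blast+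

context bfs_step
begin

lemma finite_label_unchanged: "D s \<noteq> \<infinity> \<Longrightarrow> D' s = D s"
  using pushed unchanged by metis

lemma small_label_unchanged: "D' s \<le> D (sp, se) \<Longrightarrow> D s = D' s"
  using pushed unchanged popped_finite enat_plus_1_not_le by metis

lemma sound_labels_preserved:
  assumes "symp E" and sound: "sound_labels E m f D"
  shows "sound_labels E m f D'"
proof -
  have "\<exists>a\<in>NbrP E (fst s). \<forall>b\<in>Nbr E (snd s). D' (a, b) + 1 \<le> D' s"
    if "D' s \<noteq> \<infinity>" "\<not> f (fst s) (snd s)" for s
  proof (cases "s \<in> set R")
    case True
    then have "sp \<in> NbrP E (fst s)" "\<forall>b\<in>Nbr E (snd s). D' (sp, b) + 1 \<le> D' s"
      using pushed[OF True] NbrP_sym[OF \<open>symp E\<close>] by (auto simp: pushable_def add_right_mono)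
    then show ?thesis
      by blast
  next
    case False
    with that unchanged have "D s \<noteq> \<infinity>" "D' s = D s"
      by auto
    with sound that obtain a where "a \<in> NbrP E (fst s)" "\<forall>b\<in>Nbr E (snd s). D (a, b) + 1 \<le> D s"
      unfolding sound_labels_def by metis
    moreover have "D (a, b) \<noteq> \<infinity>" if "D (a, b) + 1 \<le> D s" for b
      using that \<open>D s \<noteq> \<infinity>\<close> enat_le_finite enat_le_plus_1 order.trans by metis
    ultimately show ?thesis
      using finite_label_unchanged \<open>D' s = D s\<close> by metis
  qed
  moreover have "D' s = 0" if "s \<in> states m" "f (fst s) (snd s)" for s
  proof -
    have "D s = 0"
      using sound that unfolding sound_labels_def by blast
    then show ?thesis
      using finite_label_unchanged[of s] by simp
  qed
  ultimately show ?thesis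
    unfolding sound_labels_def by blast
qed

lemma queue_labels_bounded:
  assumes inv: "bfs_queue_inv E D ((sp, se) # Q0)" and "x \<in> set (Q0 @ R)"
  shows "D (sp, se) \<le> D' x \<and> D' x \<le> D (sp, se) + 1"
proof (cases "x \<in> set R")
  case True
  then show ?thesis
    using pushed by simp
next
  case False
  with assms have "D x \<noteq> \<infinity>" "D (sp, se) \<le> D x" "D x \<le> D (sp, se) + 1"
    unfolding bfs_queue_inv_def by auto
  then show ?thesis
    using finite_label_unchanged by simp
qed

lemma label_le_popped_plus_1:
  assumes inv: "bfs_queue_inv E D ((sp, se) # Q0)" and "D' s \<noteq> \<infinity>"
  shows "D' s \<le> D (sp, se) + 1"
proof (cases "s \<in> set R")
  case True
  then show ?thesis
    using pushed by simp
next
  case False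
  with assms unchanged have "D s \<noteq> \<infinity>" and eq: "D' s = D s"
    by auto
  show ?thesis
  proof (cases "s \<in> set ((sp, se) # Q0)")
    case True
    with bfs_queue_invD(3)[OF inv, of "(sp, se)" s] show ?thesis
      by (simp add: eq)
  next
    case False
    with bfs_queue_invD(4)[OF inv \<open>D s \<noteq> \<infinity>\<close>, of "(sp, se)"] have "D s \<le> D (sp, se)"
      by simp
    then show ?thesis
      using eq enat_le_plus_1 order.trans by metis
  qed
qed

lemma label_outside_queue:
  assumes inv: "bfs_queue_inv E D ((sp, se) # Q0)"
    and "D' p \<noteq> \<infinity>" "p \<notin> set (Q0 @ R)"
  shows "D' p = D p \<and> D p \<le> D (sp, se)"
proof -
  have eq: "D' p = D p"
    using assms(3) unchanged by simp
  moreover have "D p \<le> D (sp, se)"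
  proof (cases "p = (sp, se)")
    case False
    with assms(2,3) eq show ?thesis
      using bfs_queue_invD(4)[OF inv, of p "(sp, se)"] by simp
  qed simp
  ultimately show ?thesis ..
qed

lemma processed_preserved:
  assumes inv: "bfs_queue_inv E D ((sp, se) # Q0)"
    and finite: "D' p \<noteq> \<infinity>" and outside: "p \<notin> set (Q0 @ R)"
  shows "processed E D' p"
proof (cases "p = (sp, se)")
  case True
  with label_outside_queue[OF assms] have "D' p = D (sp, se)"
    by simp
  with True show ?thesis
    using complete label_le_popped_plus_1[OF inv] by (auto simp: processed_def)
next
  case False
  have "D p \<noteq> \<infinity>" "p \<notin> set ((sp, se) # Q0)" and eq: "D' p = D p" and le: "D p \<le> D (sp, se)"
    using False finite outside label_outside_queue[OF assms] by auto
  with inv have old: "processed E D p"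
    unfolding bfs_queue_inv_def by blast
  show ?thesis
    unfolding processed_def
  proof (intro ballI impI)
    fix ne np
    assume ne: "ne \<in> Nbr E (snd p)" and small: "\<forall>ne'\<in>Nbr E ne. D' (fst p, ne') \<le> D' p"
      and np: "np \<in> NbrP E (fst p)"
    have "D (fst p, ne') \<le> D p" if "ne' \<in> Nbr E ne" for ne'
      using small that eq le small_label_unchanged[of "(fst p, ne')"] by (metis order.trans)
    with old ne np have "D (np, ne) \<le> D p + 1"
      unfolding processed_def by blast
    moreover from this have "D (np, ne) \<noteq> \<infinity>"
      using \<open>D p \<noteq> \<infinity>\<close> by (simp add: enat_le_finite enat_plus_1_finite)
    ultimately show "D' (np, ne) \<le> D' p + 1"
      using eq finite_label_unchanged by simp
  qed
qed

lemma queue_inv_preserved: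
  assumes inv: "bfs_queue_inv E D ((sp, se) # Q0)"
  shows "bfs_queue_inv E D' (Q0 @ R)"
proof -
  note bounds = queue_labels_bounded[OF inv]
  have "\<forall>s\<in>set (Q0 @ R). D' s \<noteq> \<infinity>"
    using bounds popped_finite enat_le_finite enat_plus_1_finite by blast
  moreover have "sorted (map D' (Q0 @ R))"
  proof -
    have "map D' Q0 = map D Q0"
      using bfs_queue_invD(1)[OF inv] finite_label_unchanged by simp
    moreover have "sorted (map D Q0)"
      using bfs_queue_invD(2)[OF inv] by simp
    ultimately have "sorted (map D' Q0)"
      by metis
    moreover have "sorted (map D' R)"
      using pushed by (simp add: sorted_iff_nth_mono)
    moreover have "D' x \<le> D' y" if "x \<in> set Q0" "y \<in> set R" for x y
      using bounds[of x] pushed[OF that(2)] that(1) by simp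
    ultimately show ?thesis
      by (auto simp: sorted_append)
  qed
  moreover have "\<forall>x\<in>set (Q0 @ R). \<forall>y\<in>set (Q0 @ R). D' y \<le> D' x + 1"
    using bounds by (meson add_right_mono order.trans)
  moreover have "D' p \<le> D' x" if "D' p \<noteq> \<infinity>" "p \<notin> set (Q0 @ R)" "x \<in> set (Q0 @ R)" for p x
    using label_outside_queue[OF inv that(1,2)] bounds[OF that(3)] by auto
  ultimately show ?thesis
    using processed_preserved[OF inv] unfolding bfs_queue_inv_def by blast
qed

end

lemma alg_output_invariants:
  fixes E :: "'v \<Rightarrow> 'v \<Rightarrow> bool"
  assumes "symp E" "alg_output E m f D"
  shows "sound_labels E m f D" "\<And>p. D p \<noteq> \<infinity> \<Longrightarrow> processed E D p"
proof -
  define D0 :: "'v state \<Rightarrow> enat" where "D0 s = (if s \<in> states m \<and> f (fst s) (snd s) then 0 else \<infinity>)" for s :: "'v state"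
  obtain Q0 where Q0: "set Q0 = {s \<in> states m. f (fst s) (snd s)}"
    and steps: "(alg_step E)\<^sup>*\<^sup>* (D0, Q0) (D, [])"
    using assms(2) unfolding alg_output_def D0_def by blast
  have zero: "D0 s = 0" if "s \<in> set Q0" for s
    using that Q0 by (simp add: D0_def)
  have init_sound: "sound_labels E m f D0"
    by (simp add: sound_labels_def D0_def)
  have init_queue: "bfs_queue_inv E D0 Q0"
    unfolding bfs_queue_inv_def
  proof (intro conjI allI impI ballI)
    show "sorted (map D0 Q0)"
      using zero by (simp add: sorted_iff_nth_mono)
    show "p \<notin> set Q0 \<Longrightarrow> D0 p \<noteq> \<infinity> \<Longrightarrow> processed E D0 p" for p
      using Q0 by (simp add: D0_def split: if_splits)
  qed (use zero Q0 D0_def in auto)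
  have preserved: "sound_labels E m f D' \<and> bfs_queue_inv E D' Q'"
    if alg: "alg_step E (D, Q) (D', Q')" and inv: "sound_labels E m f D" "bfs_queue_inv E D Q"
    for D Q D' Q'
  proof -
    obtain sp se Q1 R where "Q = (sp, se) # Q1" "Q' = Q1 @ R" and step: "bfs_step E sp se D D' R"
      using alg_step_bfs_step[OF alg] bfs_queue_invD(1)[OF inv(2)] by blast
    with bfs_step.sound_labels_preserved[OF step assms(1) inv(1)]
      bfs_step.queue_inv_preserved[OF step] inv(2)
    show ?thesis
      by simp
  qed
  from steps have "sound_labels E m f D \<and> bfs_queue_inv E D []"
    by (induction rule: rtranclp_induct2) (use init_sound init_queue preserved in blast)+
  then show "sound_labels E m f D" "\<And>p. D p \<noteq> \<infinity> \<Longrightarrow> processed E D p"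
    using bfs_queue_invD(5)[of E D "[]"] by simp_all
qed

text \<open>D s = minmax_label E D s + 1 is the Bellman equation of the deterministic game in
  which the pursuers move first.\<close>

definition minmax_label :: "('v \<Rightarrow> 'v \<Rightarrow> bool) \<Rightarrow> ('v state \<Rightarrow> enat) \<Rightarrow> 'v state \<Rightarrow> enat"
  where "minmax_label E D s = Min ((\<lambda>a. Max ((\<lambda>b. D (a, b)) ` Nbr E (snd s))) ` NbrP E (fst s))"

lemma label_le_Max_plus_1:
  fixes E :: "'v::finite \<Rightarrow> 'v \<Rightarrow> bool"
  assumes "symp E" and processed: "\<And>p. D p \<noteq> \<infinity> \<Longrightarrow> processed E D p"
    and a: "a \<in> NbrP E (fst s)"
  shows "D s \<le> Max ((\<lambda>b. D (a, b)) ` Nbr E (snd s)) + 1"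
proof -
  have "Max ((\<lambda>b. D (a, b)) ` Nbr E (snd s)) \<in> (\<lambda>b. D (a, b)) ` Nbr E (snd s)"
    by (intro Max_in) (simp_all add: Nbr_nonempty)
  then obtain b0 where b0: "b0 \<in> Nbr E (snd s)" and max: "D (a, b0) = Max ((\<lambda>b. D (a, b)) ` Nbr E (snd s))"
    by auto
  show ?thesis
  proof (cases "D (a, b0) = \<infinity>")
    case False
    have "\<forall>ne'\<in>Nbr E (snd s). D (a, ne') \<le> D (a, b0)"
      by (simp add: max)
    with processed[OF False] Nbr_sym[OF assms(1) b0] NbrP_sym[OF assms(1) a]
    have "D (fst s, snd s) \<le> D (a, b0) + 1"
      unfolding processed_def fst_conv snd_conv by blast
    then show ?thesis
      by (simp add: max)
  qed (simp flip: max)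
qed

lemma alg_output_minmax_label:
  fixes E :: "'v::finite \<Rightarrow> 'v \<Rightarrow> bool"
  assumes "symp E" "alg_output E m f D" "s \<in> states m"
  shows "D s = (if f (fst s) (snd s) then 0 else minmax_label E D s + 1)"
proof (cases "f (fst s) (snd s)")
  case True
  then show ?thesis
    using alg_output_invariants(1)[OF assms(1,2)] assms(3) by (simp add: sound_labels_def)
next
  case False
  have "minmax_label E D s + 1 \<le> D s"
  proof (cases "D s = \<infinity>")
    case False
    then obtain a where "a \<in> NbrP E (fst s)" "\<forall>b\<in>Nbr E (snd s). D (a, b) + 1 \<le> D s"
      using alg_output_invariants(1)[OF assms(1,2)] \<open>\<not> f (fst s) (snd s)\<close>
      unfolding sound_labels_def by blast
    moreover have "Max ((\<lambda>b. D (a, b)) ` Nbr E (snd s)) \<in> (\<lambda>b. D (a, b)) ` Nbr E (snd s)"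
      by (intro Max_in) (simp_all add: Nbr_nonempty)
    ultimately have "Max ((\<lambda>b. D (a, b)) ` Nbr E (snd s)) + 1 \<le> D s"
      by auto
    moreover have "minmax_label E D s \<le> Max ((\<lambda>b. D (a, b)) ` Nbr E (snd s))"
      using \<open>a \<in> NbrP E (fst s)\<close> by (simp add: minmax_label_def finite_NbrP)
    ultimately show ?thesis
      by (meson add_right_mono order.trans)
  qed simp
  moreover have "D s \<le> minmax_label E D s + 1"
  proof -
    have "minmax_label E D s \<in> (\<lambda>a. Max ((\<lambda>b. D (a, b)) ` Nbr E (snd s))) ` NbrP E (fst s)"
      unfolding minmax_label_def by (intro Min_in) (simp_all add: finite_NbrP NbrP_nonempty)
    then obtain a where "a \<in> NbrP E (fst s)" "minmax_label E D s = Max ((\<lambda>b. D (a, b)) ` Nbr E (snd s))"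
      by auto
    with label_le_Max_plus_1[OF assms(1) alg_output_invariants(2)[OF assms(1,2)]] show ?thesis
      by simp
  qed
  ultimately show ?thesis
    using False by simp
qed

section \<open>Games with a min-max labelling\<close>

locale minmax_labelling =
  fixes E :: "'v::finite \<Rightarrow> 'v \<Rightarrow> bool" and m :: nat and f :: "'v list \<Rightarrow> 'v \<Rightarrow> bool"
    and \<gamma> :: real and D :: "'v state \<Rightarrow> enat"
  assumes discount: "0 < \<gamma>" "\<gamma> < 1"
    and bellman: "\<And>s. s \<in> states m \<Longrightarrow>
      D s = (if f (fst s) (snd s) then 0 else minmax_label E D s + 1)"
begin

lemma terminal_label: "s \<in> states m \<Longrightarrow> f (fst s) (snd s) \<Longrightarrow> D s = 0"
  using bellman by simp

lemma evader_reply: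
  assumes "s \<in> states m" "\<not> f (fst s) (snd s)" "a \<in> NbrP E (fst s)"
  shows "\<exists>b\<in>Nbr E (snd s). D s \<le> D (a, b) + 1"
proof -
  have "Max ((\<lambda>b. D (a, b)) ` Nbr E (snd s)) \<in> (\<lambda>b. D (a, b)) ` Nbr E (snd s)"
    by (intro Max_in) (simp_all add: Nbr_nonempty)
  then obtain b where "b \<in> Nbr E (snd s)" "D (a, b) = Max ((\<lambda>b. D (a, b)) ` Nbr E (snd s))"
    by auto
  moreover have "minmax_label E D s \<le> Max ((\<lambda>b. D (a, b)) ` Nbr E (snd s))"
    using assms(3) by (simp add: minmax_label_def finite_NbrP)
  ultimately show ?thesis
    using bellman[OF assms(1)] assms(2) by (metis add_right_mono)
qed

lemma pursuer_policy_decreases: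
  assumes \<mu>: "alg_pursuer_policy E m D \<mu>"
    and "s \<in> states m" "\<not> f (fst s) (snd s)" "b \<in> Nbr E (snd s)"
  shows "D (\<mu> s, b) + 1 \<le> D s"
proof -
  have "Max ((\<lambda>b. D (\<mu> s, b)) ` Nbr E (snd s)) \<le> minmax_label E D s"
    using \<mu> assms(2) unfolding alg_pursuer_policy_def minmax_label_def
    by (subst Min_ge_iff) (auto simp: finite_NbrP NbrP_nonempty)
  moreover have "D (\<mu> s, b) \<le> Max ((\<lambda>b. D (\<mu> s, b)) ` Nbr E (snd s))"
    using assms(4) by simp
  ultimately show ?thesis
    using bellman[OF assms(2)] assms(3) by (metis add_right_mono order.trans)
qed

lemma enat_pow_le_value_of_pursuer_policy:
  assumes \<mu>: "alg_pursuer_policy E m D \<mu>" and \<nu>: "valid_epol E m \<nu>" and "s \<in> states m"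
  shows "enat_pow \<gamma> (D s) \<le> policy_value f \<gamma> (\<lambda>s. return_pmf (\<mu> s)) \<nu> s"
proof (rule enat_pow_le_policy_value[OF discount _ \<open>s \<in> states m\<close>])
  fix s a b
  assume "s \<in> states m" "\<not> f (fst s) (snd s)" "a \<in> set_pmf (return_pmf (\<mu> s))" "b \<in> set_pmf (\<nu> s)"
  moreover from this \<mu> \<nu> have "a = \<mu> s" "\<mu> s \<in> NbrP E (fst s)" "b \<in> Nbr E (snd s)"
    by (auto simp: alg_pursuer_policy_def valid_epol_def)
  ultimately show "(a, b) \<in> states m \<and> D (a, b) + 1 \<le> D s"
    using pursuer_policy_decreases[OF \<mu>] NbrP_in_states by simp
qed

lemma value_le_enat_pow_of_evader_replies:
  assumes \<mu>: "valid_ppol E m \<mu>"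
    and reply: "\<And>s a. s \<in> states m \<Longrightarrow> \<not> f (fst s) (snd s) \<Longrightarrow> a \<in> set_pmf (\<mu> s) \<Longrightarrow>
      D s \<le> D (a, e s) + 1"
    and "s \<in> states m"
  shows "policy_value f \<gamma> \<mu> (\<lambda>s. return_pmf (e s)) s \<le> enat_pow \<gamma> (D s)"
proof (rule policy_value_le_enat_pow[OF discount terminal_label _ \<open>s \<in> states m\<close>])
  fix s a b
  assume "s \<in> states m" "\<not> f (fst s) (snd s)" "a \<in> set_pmf (\<mu> s)" "b \<in> set_pmf (return_pmf (e s))"
  moreover from this \<mu> have "a \<in> NbrP E (fst s)" "b = e s"
    by (auto simp: valid_ppol_def)
  ultimately show "(a, b) \<in> states m \<and> D s \<le> D (a, b) + 1"
    using reply NbrP_in_states by simp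
qed

lemma nash_eq_value_le:
  assumes NE: "is_nash_eq E m f \<gamma> (\<lambda>s. return_pmf (p s)) (\<lambda>s. return_pmf (q s))"
    and "s \<in> states m"
  shows "policy_value f \<gamma> (\<lambda>s. return_pmf (p s)) (\<lambda>s. return_pmf (q s)) s \<le> enat_pow \<gamma> (D s)"
proof -
  have p: "p s \<in> NbrP E (fst s)" if "s \<in> states m" for s
    using NE that by (simp add: is_nash_eq_def valid_ppol_def)
  have "\<forall>s. \<exists>b\<in>Nbr E (snd s). s \<in> states m \<longrightarrow> \<not> f (fst s) (snd s) \<longrightarrow> D s \<le> D (p s, b) + 1"
    using evader_reply p self_in_Nbr by metis
  then obtain e where e: "\<And>s. e s \<in> Nbr E (snd s)"
    "\<And>s. s \<in> states m \<Longrightarrow> \<not> f (fst s) (snd s) \<Longrightarrow> D s \<le> D (p s, e s) + 1"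
    by metis
  have "valid_epol E m (\<lambda>s. return_pmf (e s))"
    using e(1) by (simp add: valid_epol_def)
  with NE \<open>s \<in> states m\<close>
  have "policy_value f \<gamma> (\<lambda>s. return_pmf (p s)) (\<lambda>s. return_pmf (q s)) s \<le>
      policy_value f \<gamma> (\<lambda>s. return_pmf (p s)) (\<lambda>s. return_pmf (e s)) s"
    unfolding is_nash_eq_def by blast
  also have "\<dots> \<le> enat_pow \<gamma> (D s)"
    using NE e(2) \<open>s \<in> states m\<close>
    by (intro value_le_enat_pow_of_evader_replies) (auto simp: is_nash_eq_def)
  finally show ?thesis .
qed

lemma nash_eq_evader_move_saddle:
  assumes \<mu>: "alg_pursuer_policy E m D \<mu>"
    and NE: "is_nash_eq E m f \<gamma> (\<lambda>s. return_pmf (p s)) (\<lambda>s. return_pmf (q s))"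
    and s: "s \<in> states m" "\<not> f (fst s) (snd s)" and a: "a \<in> NbrP E (fst s)"
  shows "D s \<le> D (a, q s) + 1"
proof (rule ccontr)
  assume "\<not> D s \<le> D (a, q s) + 1"
  then have lt: "D (a, q s) + 1 < D s"
    by (simp add: not_le)
  define p' where "p' x = (if x = s then a else \<mu> x)" for x
  define h where "h x = (if x = s then D (a, q s) + 1 else D x)" for x
  have h_le: "h x \<le> D x" for x
    using lt by (simp add: h_def less_imp_le)
  have q: "q x \<in> Nbr E (snd x)" if "x \<in> states m" for x
    using NE that by (simp add: is_nash_eq_def valid_epol_def)
  have "valid_ppol E m (\<lambda>x. return_pmf (p' x))"
    using a \<mu> by (simp add: valid_ppol_def p'_def alg_pursuer_policy_def)
  then have "policy_value f \<gamma> (\<lambda>x. return_pmf (p' x)) (\<lambda>x. return_pmf (q x)) s \<le>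
      policy_value f \<gamma> (\<lambda>x. return_pmf (p x)) (\<lambda>x. return_pmf (q x)) s"
    using NE s(1) unfolding is_nash_eq_def by blast
  moreover have "enat_pow \<gamma> (h s) \<le> policy_value f \<gamma> (\<lambda>x. return_pmf (p' x)) (\<lambda>x. return_pmf (q x)) s"
  proof (rule enat_pow_le_policy_value[OF discount _ s(1)])
    fix s' a' b
    assume s': "s' \<in> states m" "\<not> f (fst s') (snd s')"
      and "a' \<in> set_pmf (return_pmf (p' s'))" "b \<in> set_pmf (return_pmf (q s'))"
    then have ab: "a' = p' s'" "b = q s'"
      by simp_all
    show "(a', b) \<in> states m \<and> h (a', b) + 1 \<le> h s'"
    proof (cases "s' = s")
      case True
      with ab h_le[of "(a, q s)"] show ?thesis
        using NbrP_in_states[OF s(1) a] by (simp add: p'_def h_def add_right_mono)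
    next
      case False
      have "h (\<mu> s', q s') + 1 \<le> D s'"
        using order.trans[OF add_right_mono[OF h_le] pursuer_policy_decreases[OF \<mu> s' q[OF s'(1)]]] .
      moreover have "h s' = D s'" "a' = \<mu> s'"
        using False ab by (simp_all add: h_def p'_def)
      moreover have "\<mu> s' \<in> NbrP E (fst s')"
        using \<mu> s'(1) by (simp add: alg_pursuer_policy_def)
      ultimately show ?thesis
        using ab NbrP_in_states[OF s'(1)] by simp
    qed
  qed
  moreover have "enat_pow \<gamma> (D s) < enat_pow \<gamma> (h s)"
    using enat_pow_strict_antimono[OF discount] lt by (simp add: h_def)
  ultimately show False
    using nash_eq_value_le[OF NE s(1)] by simp
qed

lemma evader_policy_saddle:
  assumes \<mu>: "alg_pursuer_policy E m D \<mu>" and \<nu>: "alg_evader_policy E m D \<nu>"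
    and pure_NE: "has_pure_nash_eq E m f \<gamma>"
    and s: "s \<in> states m" "\<not> f (fst s) (snd s)" and a: "a \<in> NbrP E (fst s)"
  shows "D s \<le> D (a, \<nu> s) + 1"
proof -
  obtain p q where NE: "is_nash_eq E m f \<gamma> (\<lambda>s. return_pmf (p s)) (\<lambda>s. return_pmf (q s))"
    using pure_NE by (auto simp: has_pure_nash_eq_def)
  let ?Mn = "\<lambda>b. Min ((\<lambda>np. D (np, b)) ` NbrP E (fst s))"
  have "?Mn (q s) \<in> (\<lambda>np. D (np, q s)) ` NbrP E (fst s)"
    by (intro Min_in) (simp_all add: finite_NbrP NbrP_nonempty)
  then obtain a0 where a0: "a0 \<in> NbrP E (fst s)" "?Mn (q s) = D (a0, q s)"
    by auto
  have "q s \<in> Nbr E (snd s)"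
    using NE s(1) by (simp add: is_nash_eq_def valid_epol_def)
  then have "?Mn (q s) \<le> ?Mn (\<nu> s)"
    using \<nu> s(1) by (simp add: alg_evader_policy_def)
  also have "?Mn (\<nu> s) \<le> D (a, \<nu> s)"
    using a by (simp add: finite_NbrP)
  finally have "D (a0, q s) + 1 \<le> D (a, \<nu> s) + 1"
    using a0(2) by (simp add: add_right_mono)
  with nash_eq_evader_move_saddle[OF \<mu> NE s a0(1)] show ?thesis
    by (rule order.trans)
qed

lemma alg_policies_value:
  assumes \<mu>: "alg_pursuer_policy E m D \<mu>" and \<nu>: "alg_evader_policy E m D \<nu>"
    and pure_NE: "has_pure_nash_eq E m f \<gamma>" and "s \<in> states m"
  shows "policy_value f \<gamma> (\<lambda>s. return_pmf (\<mu> s)) (\<lambda>s. return_pmf (\<nu> s)) s = enat_pow \<gamma> (D s)"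
proof (rule antisym)
  have "valid_ppol E m (\<lambda>s. return_pmf (\<mu> s))"
    using \<mu> by (simp add: valid_ppol_def alg_pursuer_policy_def)
  then show "policy_value f \<gamma> (\<lambda>s. return_pmf (\<mu> s)) (\<lambda>s. return_pmf (\<nu> s)) s \<le> enat_pow \<gamma> (D s)"
    using evader_policy_saddle[OF \<mu> \<nu> pure_NE] \<mu> \<open>s \<in> states m\<close>
    by (intro value_le_enat_pow_of_evader_replies) (auto simp: alg_pursuer_policy_def)
  have "valid_epol E m (\<lambda>s. return_pmf (\<nu> s))"
    using \<nu> by (simp add: valid_epol_def alg_evader_policy_def)
  then show "enat_pow \<gamma> (D s) \<le> policy_value f \<gamma> (\<lambda>s. return_pmf (\<mu> s)) (\<lambda>s. return_pmf (\<nu> s)) s"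
    using enat_pow_le_value_of_pursuer_policy[OF \<mu> _ \<open>s \<in> states m\<close>] by blast
qed

lemma alg_policies_nash_eq:
  assumes \<mu>: "alg_pursuer_policy E m D \<mu>" and \<nu>: "alg_evader_policy E m D \<nu>"
    and pure_NE: "has_pure_nash_eq E m f \<gamma>"
  shows "is_nash_eq E m f \<gamma> (\<lambda>s. return_pmf (\<mu> s)) (\<lambda>s. return_pmf (\<nu> s))"
  unfolding is_nash_eq_def
proof (intro conjI allI impI ballI)
  show "valid_ppol E m (\<lambda>s. return_pmf (\<mu> s))"
    using \<mu> by (simp add: valid_ppol_def alg_pursuer_policy_def)
  show "valid_epol E m (\<lambda>s. return_pmf (\<nu> s))"
    using \<nu> by (simp add: valid_epol_def alg_evader_policy_def)
next
  fix \<mu>' and s :: "'v state"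
  assume "valid_ppol E m \<mu>'" "s \<in> states m"
  with evader_policy_saddle[OF \<mu> \<nu> pure_NE] alg_policies_value[OF \<mu> \<nu> pure_NE]
  show "policy_value f \<gamma> \<mu>' (\<lambda>s. return_pmf (\<nu> s)) s \<le>
      policy_value f \<gamma> (\<lambda>s. return_pmf (\<mu> s)) (\<lambda>s. return_pmf (\<nu> s)) s"
    by (simp add: value_le_enat_pow_of_evader_replies valid_ppol_def subset_iff)
next
  fix \<nu>' and s :: "'v state"
  assume "valid_epol E m \<nu>'" "s \<in> states m"
  with enat_pow_le_value_of_pursuer_policy[OF \<mu>] alg_policies_value[OF \<mu> \<nu> pure_NE]
  show "policy_value f \<gamma> (\<lambda>s. return_pmf (\<mu> s)) (\<lambda>s. return_pmf (\<nu> s)) s \<le>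
      policy_value f \<gamma> (\<lambda>s. return_pmf (\<mu> s)) \<nu>' s"
    by simp
qed

lemma nash_value_eq_enat_pow:
  assumes \<mu>: "alg_pursuer_policy E m D \<mu>" and \<nu>: "alg_evader_policy E m D \<nu>"
    and pure_NE: "has_pure_nash_eq E m f \<gamma>" and "s \<in> states m"
  shows "nash_value E m f \<gamma> s = enat_pow \<gamma> (D s)"
proof -
  define V where "V s = (if s \<in> states m then enat_pow \<gamma> (D s) else 0)" for s
  have bounded: "\<bar>V x\<bar> \<le> 1" for x
    using discount enat_pow_nonneg[of \<gamma>] enat_pow_le_1[of \<gamma>] by (simp add: V_def)
  have "V s = shapley_rhs E f \<gamma> V s" if "s \<in> states m" for s
  proof (cases "f (fst s) (snd s)")
    case True
    with that show ?thesis
      by (simp add: V_def shapley_rhs_def terminal_label)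
  next
    case False
    have "\<mu> s \<in> NbrP E (fst s)" "\<nu> s \<in> Nbr E (snd s)"
      using \<mu> \<nu> that by (simp_all add: alg_pursuer_policy_def alg_evader_policy_def)
    moreover have "enat_pow \<gamma> (D s) \<le> \<gamma> * V (\<mu> s, b)" if "b \<in> Nbr E (snd s)" for b
      using pursuer_policy_decreases[OF \<mu> \<open>s \<in> states m\<close> False that] discount
        NbrP_in_states[OF \<open>s \<in> states m\<close> \<open>\<mu> s \<in> NbrP E (fst s)\<close>]
      by (simp add: V_def enat_pow_le_mult_enat_pow)
    moreover have "\<gamma> * V (a, \<nu> s) \<le> enat_pow \<gamma> (D s)" if "a \<in> NbrP E (fst s)" for a
      using evader_policy_saddle[OF \<mu> \<nu> pure_NE \<open>s \<in> states m\<close> False that] discount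
        NbrP_in_states[OF \<open>s \<in> states m\<close> that]
      by (simp add: V_def mult_enat_pow_le_enat_pow)
    ultimately have "shapley_rhs E f \<gamma> V s = enat_pow \<gamma> (D s)"
      by (intro shapley_rhs_eq_saddle[where f = f and s = s and V = V and B = 1, OF discount(1) False bounded])
    with \<open>s \<in> states m\<close> show ?thesis
      by (simp add: V_def)
  qed
  then have "is_nash_value E m f \<gamma> V"
    by (simp add: is_nash_value_def V_def)
  with \<open>s \<in> states m\<close> show ?thesis
    by (simp add: nash_value_eqI[OF discount] V_def)
qed

end

theorem theorem1:
  fixes E :: "'v::finite \<Rightarrow> 'v \<Rightarrow> bool"
    and m :: nat
    and f :: "'v list \<Rightarrow> 'v \<Rightarrow> bool"
    and \<gamma> :: real
    and D :: "'v state \<Rightarrow> enat"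
    and \<mu> :: "'v state \<Rightarrow> 'v list"
    and \<nu> :: "'v state \<Rightarrow> 'v"
  assumes undirected: "\<forall>u v. E u v \<longrightarrow> E v u"
    and m_pos: "m \<ge> 1"
    and gamma: "0 < \<gamma>" "\<gamma> < 1"
    and alg_out: "alg_output E m f D"
    and mu_def: "alg_pursuer_policy E m D \<mu>"
    and nu_def: "alg_evader_policy E m D \<nu>"
    and pure_NE: "has_pure_nash_eq E m f \<gamma>"
  shows "(\<forall>s\<in>states m. nash_value E m f \<gamma> s = enat_pow \<gamma> (D s)) \<and>
         is_nash_eq E m f \<gamma> (\<lambda>s. return_pmf (\<mu> s)) (\<lambda>s. return_pmf (\<nu> s))"
proof -
  have "symp E"
    using undirected by (simp add: symp_def)
  interpret minmax_labelling E m f \<gamma> D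
    using gamma alg_output_minmax_label[OF \<open>symp E\<close> alg_out] by unfold_locales
  show ?thesis
    using nash_value_eq_enat_pow[OF mu_def nu_def pure_NE] alg_policies_nash_eq[OF mu_def nu_def pure_NE]
    by simp
qed

end
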